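(* Under the hypotheses of Lemma 1 (finite multi-set $\mathcal X=\{X_1,\dots,X_n\}$ of real symmetric $2\times2$ matrices, $\lambda_1$ the unique largest eigenvalue of $\mathcal X$, belonging to $X_1$, with $u_1=e_1$, $v_1=e_2$), let $S=\lim_{m\to\infty}\frac1m\log\sum_{i=1}^n\exp(mX_i)$. Then $e_2$ is an eigenvector of $S$ whose eigenvalue equals $\mu_*$, the largest eigenvalue of $\mathcal X$ (among the eigenvalues $\lambda_i,\mu_i$, excluding the occurrence $\lambda_1$ itself) whose associated eigenvector (i.e. $u_i$ for $\lambda_i$, $v_i$ for $\mu_i$) is not aligned with $e_1$.
   Context: $\exp$ and $\log$ denote the matrix exponential and matrix logarithm. Every real symmetric $2\times2$ matrix $X_i$ is written in spectral form $X_i=\lambda_i u_iu_i^{\mathsf T}+\mu_i v_iv_i^{\mathsf T}$ with $\lambda_i\ge\mu_i$, $u_i=(\cos\varphi_i,\sin\varphi_i)^{\mathsf T}$, $v_i=(-\sin\varphi_i,\cos\varphi_i)^{\mathsf T}$, $\varphi_i\in[-\pi/2,\pi/2]$. "The eigenvalues of $\mathcal X$" means the multi-set of all $2n$ numbers $\lambda_1,\mu_1,\dots,\lambda_n,\mu_n$; an eigenvalue is unique if it occurs exactly once in this multi-set. Two unit vectors are aligned if they are equal up to sign. $e_1=(1,0)^{\mathsf T}$, $e_2=(0,1)^{\mathsf T}$. *)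

theory Defs
  imports "HOL-Analysis.Analysis"
begin

type_synonym mat2 = "real^2^2"

definition matpow :: "mat2 \<Rightarrow> nat \<Rightarrow> mat2" where
  "matpow A k = ((\<lambda>B. A ** B) ^^ k) (mat 1)"

definition mexp :: "mat2 \<Rightarrow> mat2" where
  "mexp A = (\<Sum>k. (1 / fact k) *\<^sub>R matpow A k)"

definition mlog :: "mat2 \<Rightarrow> mat2" where
  "mlog A = (THE L. transpose L = L \<and> mexp L = A)"

definition outer :: "real^2 \<Rightarrow> mat2" where
  "outer w = (\<chi> i j. w $ i * w $ j)"

definition e1 :: "real^2" where "e1 = axis 1 1"
definition e2 :: "real^2" where "e2 = axis 2 1"

definition uvec :: "real \<Rightarrow> real^2" where
  "uvec \<phi> = vector [cos \<phi>, sin \<phi>]"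
definition vvec :: "real \<Rightarrow> real^2" where
  "vvec \<phi> = vector [- sin \<phi>, cos \<phi>]"

definition spec_mat :: "real \<Rightarrow> real \<Rightarrow> real \<Rightarrow> mat2" where
  "spec_mat lam mu \<phi> = lam *\<^sub>R outer (uvec \<phi>) + mu *\<^sub>R outer (vvec \<phi>)"

definition aligned :: "real^2 \<Rightarrow> real^2 \<Rightarrow> bool" where
  "aligned a b \<longleftrightarrow> a = b \<or> a = - b"

end

(*
  Write M(m) = sum_i exp (m X_i) = sum_i spec_mat (exp (m lam i)) (exp (m mu i)) (phi i), indices
  starting at 0. The (1,1) entry of M(m) is of order exp (m lam 0). Its (2,2) entry is of order
  exp (m mu_star): summand i contributes exp (m lam i) sin^2 (phi i) + exp (m mu i) cos^2 (phi i),
  and sin (phi i), resp. cos (phi i), vanishes exactly when u_i, resp. v_i, is aligned with e1.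
  The off-diagonal entry is O(exp (m r)) for some r < lam 0, because the summand 0 is diagonal.
  Hence the eigenvalues alpha >= beta of M(m) satisfy log alpha / m --> lam 0 and
  log beta / m --> mu_star (beta = det M / alpha, and the diagonal summand 0 bounds det M below by
  exp (m lam 0) M(m)$2$2), and alpha - beta >= exp (m lam 0) / 2 eventually.
  On a symmetric 2x2 matrix the logarithm is the affine interpolation
    log M = log beta I + (log alpha - log beta) / (alpha - beta) (M - beta I),
  where (log alpha - log beta) / m converges, while the (1,2) and (2,2) entries of
  (M - beta I) / (alpha - beta) are exponentially small. So (1/m) log M(m) e2 --> mu_star e2.
*)

theory Submission
  imports Defs
begin

lemma mat2_eq_iff:
  "(A::mat2) = B \<longleftrightarrow> A$1$1 = B$1$1 \<and> A$1$2 = B$1$2 \<and> A$2$1 = B$2$1 \<and> A$2$2 = B$2$2"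
  by (auto simp: vec_eq_iff forall_2)

lemma vec2_eq_iff: "(a::real^2) = b \<longleftrightarrow> a$1 = b$1 \<and> a$2 = b$2"
  by (auto simp: vec_eq_iff forall_2)

lemma mat1_nth [simp]:
  "(mat 1 :: mat2)$1$1 = 1" "(mat 1 :: mat2)$1$2 = 0" "(mat 1 :: mat2)$2$1 = 0" "(mat 1 :: mat2)$2$2 = 1"
  by (simp_all add: mat_def)

section \<open>Matrices in spectral form\<close>

lemma spec_mat_nth:
  "spec_mat a b t $1$1 = a * cos t ^ 2 + b * sin t ^ 2"
  "spec_mat a b t $1$2 = (a - b) * cos t * sin t"
  "spec_mat a b t $2$1 = (a - b) * cos t * sin t"
  "spec_mat a b t $2$2 = a * sin t ^ 2 + b * cos t ^ 2"
  by (simp_all add: spec_mat_def outer_def uvec_def vvec_def power2_eq_square algebra_simps)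

lemma spec_mat_mult: "spec_mat a b t ** spec_mat a' b' t = spec_mat (a * a') (b * b') t"
proof -
  have "cos t * cos t + sin t * sin t = 1"
    by (metis power2_eq_square sin_cos_squared_add2)
  then show ?thesis
    unfolding mat2_eq_iff matrix_matrix_mult_def
    by (simp add: sum_2 spec_mat_nth power2_eq_square, intro conjI; algebra)
qed

lemma spec_mat_same: "spec_mat a a t = a *\<^sub>R mat 1"
proof -
  have "a * cos t ^ 2 + a * sin t ^ 2 = a"
    by (metis mult.right_neutral distrib_left sin_cos_squared_add2)
  then show ?thesis
    unfolding mat2_eq_iff by (simp add: spec_mat_nth algebra_simps)
qed

lemma scaleR_spec_mat: "c *\<^sub>R spec_mat a b t = spec_mat (c * a) (c * b) t"
  unfolding mat2_eq_iff by (simp add: spec_mat_nth algebra_simps)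

lemma spec_mat_add: "spec_mat a b t + spec_mat a' b' t = spec_mat (a + a') (b + b') t"
  unfolding mat2_eq_iff by (simp add: spec_mat_nth algebra_simps)

lemma matpow_spec_mat: "matpow (spec_mat a b t) k = spec_mat (a ^ k) (b ^ k) t"
  by (induction k) (simp_all add: matpow_def spec_mat_same spec_mat_mult)

lemma mexp_spec_mat: "mexp (spec_mat a b t) = spec_mat (exp a) (exp b) t"
proof -
  have "(\<lambda>k. (1 / fact k) *\<^sub>R matpow (spec_mat a b t) k) =
        (\<lambda>k. (a ^ k /\<^sub>R fact k) *\<^sub>R spec_mat 1 0 t + (b ^ k /\<^sub>R fact k) *\<^sub>R spec_mat 0 1 t)"
    by (simp add: matpow_spec_mat scaleR_spec_mat spec_mat_add divide_inverse_commute)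
  moreover have "\<dots> sums (exp a *\<^sub>R spec_mat 1 0 t + exp b *\<^sub>R spec_mat 0 1 t)"
    by (intro sums_add sums_scaleR_left exp_converges)
  ultimately show ?thesis
    unfolding mexp_def by (simp add: sums_iff scaleR_spec_mat spec_mat_add)
qed

lemma spec_mat_swap: "spec_mat b a (t + pi / 2) = spec_mat a b t"
  unfolding mat2_eq_iff by (simp add: spec_mat_nth sin_add cos_add algebra_simps)

lemma transpose_spec_mat: "transpose (spec_mat a b t) = spec_mat a b t"
  unfolding mat2_eq_iff transpose_def by (simp add: spec_mat_nth)

lemma spec_mat_trace: "spec_mat a b t $1$1 + spec_mat a b t $2$2 = a + b"
  unfolding spec_mat_nth using sin_cos_squared_add[of t] by algebra

lemma spec_mat_det:
  "spec_mat a b t $1$1 * spec_mat a b t $2$2 - spec_mat a b t $1$2 * spec_mat a b t $2$1 = a * b"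
  unfolding spec_mat_nth using sin_cos_squared_add[of t] by algebra

lemma spec_mat_affine: "spec_mat (c + d * a) (c + d * b) t = c *\<^sub>R mat 1 + d *\<^sub>R spec_mat a b t"
  by (simp add: scaleR_spec_mat spec_mat_add flip: spec_mat_same[of c t])

lemma spec_mat_fun:
  assumes "a \<noteq> b"
  shows "spec_mat (g a) (g b) t = g b *\<^sub>R mat 1 + ((g a - g b) / (a - b)) *\<^sub>R (spec_mat a b t - b *\<^sub>R mat 1)"
proof -
  define d where "d = (g a - g b) / (a - b)"
  have "g a = (g b - d * b) + d * a" "g b = (g b - d * b) + d * b"
    using assms by (simp_all add: d_def divide_simps) (simp_all add: algebra_simps)
  then have "spec_mat (g a) (g b) t = (g b - d * b) *\<^sub>R mat 1 + d *\<^sub>R spec_mat a b t"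
    by (metis spec_mat_affine)
  then show ?thesis
    by (simp add: d_def[symmetric] algebra_simps)
qed

lemma spec_mat_fun_cong:
  assumes "spec_mat a b t = spec_mat a' b' t'"
  shows "spec_mat (g a) (g b) t = spec_mat (g a') (g b') t'"
proof -
  have sum: "b = a' + b' - a"
    using spec_mat_trace[of a b t] spec_mat_trace[of a' b' t'] assms by simp
  have "a * b = a' * b'"
    using spec_mat_det[of a b t] spec_mat_det[of a' b' t'] assms by simp
  then have "(a - a') * (a - b') = 0"
    unfolding sum by (simp add: algebra_simps)
  then consider "a = a'" "b = b'" | "a = b'" "b = a'"
    using sum by fastforce
  then show ?thesis
  proof cases
    case 1
    then show ?thesis
      using assms spec_mat_fun[of a b g] spec_mat_same by (cases "a = b") auto
  next
    case 2
    then have "spec_mat a b t = spec_mat a b (t' + pi / 2)"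
      using assms spec_mat_swap by simp
    then have "spec_mat (g a) (g b) t = spec_mat (g a) (g b) (t' + pi / 2)"
      using spec_mat_fun[of a b g] spec_mat_same by (cases "a = b") auto
    then show ?thesis
      using 2 spec_mat_swap by simp
  qed
qed

section \<open>Eigenvalues and the matrix logarithm\<close>

text \<open>The eigenvalues of a symmetric matrix; the entry \<open>M$2$1\<close> is not read.\<close>
definition eig_max :: "mat2 \<Rightarrow> real" where
  "eig_max M = (M$1$1 + M$2$2) / 2 + sqrt (((M$1$1 - M$2$2) / 2)\<^sup>2 + (M$1$2)\<^sup>2)"

definition eig_min :: "mat2 \<Rightarrow> real" where
  "eig_min M = (M$1$1 + M$2$2) / 2 - sqrt (((M$1$1 - M$2$2) / 2)\<^sup>2 + (M$1$2)\<^sup>2)"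

lemma eig_max_plus_eig_min: "eig_max M + eig_min M = M$1$1 + M$2$2"
  by (simp add: eig_max_def eig_min_def)

lemma eig_max_mult_eig_min: "eig_max M * eig_min M = M$1$1 * M$2$2 - (M$1$2)\<^sup>2"
proof -
  have "eig_max M * eig_min M
      = ((M$1$1 + M$2$2) / 2)\<^sup>2 - (sqrt (((M$1$1 - M$2$2) / 2)\<^sup>2 + (M$1$2)\<^sup>2))\<^sup>2"
    unfolding eig_max_def eig_min_def by (simp only: power2_eq_square algebra_simps)
  also have "\<dots> = ((M$1$1 + M$2$2) / 2)\<^sup>2 - (((M$1$1 - M$2$2) / 2)\<^sup>2 + (M$1$2)\<^sup>2)"
    by simp
  finally show ?thesis
    by (simp add: power2_eq_square field_simps)
qed

lemma eig_max_minus_eig_min_ge: "M$1$1 - M$2$2 \<le> eig_max M - eig_min M"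
proof -
  have "\<bar>(M$1$1 - M$2$2) / 2\<bar> \<le> sqrt (((M$1$1 - M$2$2) / 2)\<^sup>2 + (M$1$2)\<^sup>2)"
    by (metis abs_ge_zero le_add_same_cancel1 real_sqrt_abs real_sqrt_le_mono zero_le_power2)
  then show ?thesis
    using abs_ge_self[of "(M$1$1 - M$2$2) / 2"] by (simp add: eig_max_def eig_min_def)
qed

lemma eig_min_le_eig_max: "eig_min M \<le> eig_max M"
  by (simp add: eig_max_def eig_min_def)

lemma eig_max_ge: "M$1$1 \<le> eig_max M"
  using eig_max_minus_eig_min_ge[of M] eig_max_plus_eig_min[of M] by linarith

lemma eig_min_le: "eig_min M \<le> M$2$2"
  using eig_max_minus_eig_min_ge[of M] eig_max_plus_eig_min[of M] by linarith

lemma eig_min_pos: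
  assumes "M$1$1 > 0" "M$1$1 * M$2$2 - (M$1$2)\<^sup>2 > 0"
  shows "eig_min M > 0"
proof -
  have "eig_max M * eig_min M > 0"
    using assms(2) by (simp add: eig_max_mult_eig_min)
  moreover have "eig_max M > 0"
    using eig_max_ge[of M] assms(1) by linarith
  ultimately show ?thesis
    by (simp add: zero_less_mult_iff)
qed

lemma spec_mat_half_angle_nth:
  "spec_mat (m + r) (m - r) (\<theta> / 2) $1$1 = m + r * cos \<theta>"
  "spec_mat (m + r) (m - r) (\<theta> / 2) $1$2 = r * sin \<theta>"
  "spec_mat (m + r) (m - r) (\<theta> / 2) $2$1 = r * sin \<theta>"
  "spec_mat (m + r) (m - r) (\<theta> / 2) $2$2 = m - r * cos \<theta>"
proof -
  have "\<theta> = 2 * (\<theta> / 2)"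
    by simp
  then have "cos \<theta> = cos (\<theta> / 2) ^ 2 - sin (\<theta> / 2) ^ 2" "sin \<theta> = 2 * sin (\<theta> / 2) * cos (\<theta> / 2)"
    by (metis cos_double, metis sin_double)
  then show
    "spec_mat (m + r) (m - r) (\<theta> / 2) $1$1 = m + r * cos \<theta>"
    "spec_mat (m + r) (m - r) (\<theta> / 2) $1$2 = r * sin \<theta>"
    "spec_mat (m + r) (m - r) (\<theta> / 2) $2$1 = r * sin \<theta>"
    "spec_mat (m + r) (m - r) (\<theta> / 2) $2$2 = m - r * cos \<theta>"
    unfolding spec_mat_nth using sin_cos_squared_add[of "\<theta> / 2"] by algebra+
qed

lemma symmetric_eq_spec_mat:
  assumes "transpose M = M"
  obtains t where "M = spec_mat (eig_max M) (eig_min M) t"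
proof -
  have sym: "M$2$1 = M$1$2"
    using arg_cong[OF assms, of "\<lambda>A. A$1$2"] by (simp add: transpose_def)
  define m where "m = (M$1$1 + M$2$2) / 2"
  define p where "p = (M$1$1 - M$2$2) / 2"
  define r where "r = sqrt (p\<^sup>2 + (M$1$2)\<^sup>2)"
  have eig: "eig_max M = m + r" "eig_min M = m - r"
    by (simp_all add: eig_max_def eig_min_def m_def r_def p_def)
  obtain \<theta> where \<theta>: "p = r * cos \<theta>" "M$1$2 = r * sin \<theta>"
  proof (cases "r = 0")
    case True
    then show ?thesis
      using that[of 0] by (simp add: r_def)
  next
    case False
    then have "r > 0"
      by (simp add: r_def sum_power2_gt_zero_iff)
    have "(p / r)\<^sup>2 + (M$1$2 / r)\<^sup>2 = (p\<^sup>2 + (M$1$2)\<^sup>2) / r\<^sup>2"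
      by (simp add: power_divide add_divide_distrib)
    also have "\<dots> = 1"
      using \<open>r > 0\<close> by (simp add: r_def sum_power2_gt_zero_iff)
    finally obtain \<theta> where "p / r = cos \<theta>" "M$1$2 / r = sin \<theta>"
      by (rule sincos_total_2pi) auto
    then show ?thesis
      using that[of \<theta>] \<open>r > 0\<close> by (simp add: field_simps)
  qed
  have "M = spec_mat (eig_max M) (eig_min M) (\<theta> / 2)"
    unfolding mat2_eq_iff eig spec_mat_half_angle_nth using \<theta> sym
    by (simp add: m_def p_def field_simps)
  then show ?thesis ..
qed

lemma mlog_spec_mat:
  assumes "a > 0" "b > 0"
  shows "mlog (spec_mat a b t) = spec_mat (ln a) (ln b) t"
  unfolding mlog_def
proof (rule the_equality)
  fix L
  assume L: "transpose L = L \<and> mexp L = spec_mat a b t"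
  then obtain t' where L_eq: "L = spec_mat (eig_max L) (eig_min L) t'"
    using symmetric_eq_spec_mat by blast
  then have "spec_mat (exp (eig_max L)) (exp (eig_min L)) t' = spec_mat a b t"
    using L by (metis mexp_spec_mat)
  then have "spec_mat (ln (exp (eig_max L))) (ln (exp (eig_min L))) t' = spec_mat (ln a) (ln b) t"
    by (rule spec_mat_fun_cong)
  then show "L = spec_mat (ln a) (ln b) t"
    using L_eq by simp
qed (use assms in \<open>simp add: transpose_spec_mat mexp_spec_mat\<close>)

lemma mlog_eq_interpolation:
  assumes "transpose M = M" "eig_min M > 0" "eig_min M \<noteq> eig_max M"
  shows "mlog M = ln (eig_min M) *\<^sub>R mat 1
    + ((ln (eig_max M) - ln (eig_min M)) / (eig_max M - eig_min M)) *\<^sub>R (M - eig_min M *\<^sub>R mat 1)"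
proof -
  obtain t where t: "M = spec_mat (eig_max M) (eig_min M) t"
    using assms(1) by (rule symmetric_eq_spec_mat)
  have "eig_max M > 0"
    using assms(2) eig_min_le_eig_max[of M] by linarith
  then have "mlog M = spec_mat (ln (eig_max M)) (ln (eig_min M)) t"
    using assms(2) t by (metis mlog_spec_mat)
  also have "\<dots> = ln (eig_min M) *\<^sub>R mat 1
    + ((ln (eig_max M) - ln (eig_min M)) / (eig_max M - eig_min M)) *\<^sub>R (M - eig_min M *\<^sub>R mat 1)"
    using assms(3) t spec_mat_fun[of "eig_max M" "eig_min M" ln t] by simp
  finally show ?thesis .
qed

lemma eig_bounds_of_det_ge:
  assumes "0 < E" "E \<le> M$1$1" "0 < M$2$2" "M$1$1 + M$2$2 \<le> C * E"
    and det: "E * M$2$2 \<le> M$1$1 * M$2$2 - (M$1$2)\<^sup>2"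
  shows "0 < eig_min M" "eig_max M \<le> C * E" "M$2$2 / C \<le> eig_min M"
proof -
  have "0 < E * M$2$2"
    using assms(1,3) by simp
  then show pos: "0 < eig_min M"
    using assms(1,2) det by (intro eig_min_pos) linarith+
  then show hi: "eig_max M \<le> C * E"
    using eig_max_plus_eig_min[of M] assms(4) by linarith
  have "E * M$2$2 \<le> eig_max M * eig_min M"
    using det by (simp add: eig_max_mult_eig_min)
  also have "\<dots> \<le> (C * E) * eig_min M"
    using hi pos by (intro mult_right_mono) auto
  finally have "M$2$2 \<le> C * eig_min M"
    using \<open>0 < E\<close> by (simp add: algebra_simps)
  moreover have "0 < C * E"
    using assms(1-4) by linarith
  then have "0 < C"
    using \<open>0 < E\<close> by (simp add: zero_less_mult_iff)
  ultimately show "M$2$2 / C \<le> eig_min M"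
    by (simp add: divide_le_eq mult.commute)
qed

section \<open>Exponential growth rates\<close>

lemma finite_strict_upper_bound:
  fixes F :: "real set"
  assumes "finite F" "\<And>x. x \<in> F \<Longrightarrow> x < a"
  obtains r where "r < a" "\<And>x. x \<in> F \<Longrightarrow> x \<le> r"
proof
  show "Max (insert (a - 1) F) < a"
    using assms by (subst Max_less_iff) auto
qed (use assms in simp)

lemma exp_mult_mono: "x \<le> y \<Longrightarrow> exp (real m * x) \<le> exp (real m * y)"
  by (simp add: mult_left_mono)

lemma tendsto_exp_mult_neg: "a < 0 \<Longrightarrow> (\<lambda>m. exp (real m * a)) \<longlonglongrightarrow> 0"
  by (simp add: exp_of_nat_mult LIMSEQ_power_zero)

lemma tendsto_ln_div_of_exp_bounds:
  fixes f :: "nat \<Rightarrow> real"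
  assumes "0 < c" "\<And>m. c * exp (real m * a) \<le> f m" "\<And>m. f m \<le> C * exp (real m * a)"
  shows "(\<lambda>m. ln (f m) / real m) \<longlonglongrightarrow> a"
proof (rule tendsto_sandwich)
  have "0 < C"
    using assms(1) assms(2,3)[of 0] by simp
  have "ln (f m) / real m \<le> a + ln C / real m \<and> a + ln c / real m \<le> ln (f m) / real m"
    if "m > 0" for m
  proof -
    have "0 < c * exp (real m * a)"
      using \<open>0 < c\<close> by simp
    then have "ln (c * exp (real m * a)) \<le> ln (f m)" "ln (f m) \<le> ln (C * exp (real m * a))"
      using assms(2)[of m] assms(3)[of m] by (subst ln_le_cancel_iff; force)+
    then have "ln c + real m * a \<le> ln (f m)" "ln (f m) \<le> ln C + real m * a"
      using \<open>0 < c\<close> \<open>0 < C\<close> by (simp_all add: ln_mult)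
    moreover have "a + ln c / real m = (ln c + real m * a) / real m"
      "a + ln C / real m = (ln C + real m * a) / real m"
      using that by (simp_all add: field_simps)
    ultimately show ?thesis
      by (simp add: divide_right_mono)
  qed
  then show "\<forall>\<^sub>F m in sequentially. a + ln c / real m \<le> ln (f m) / real m"
    "\<forall>\<^sub>F m in sequentially. ln (f m) / real m \<le> a + ln C / real m"
    by (auto intro: eventually_sequentiallyI[of 1])
qed (auto intro!: tendsto_eq_intros lim_const_over_n)

lemma tendsto_div_exp_dominated:
  fixes f g :: "nat \<Rightarrow> real"
  assumes g: "\<forall>\<^sub>F m in sequentially. exp (real m * a) / 2 \<le> g m"
    and f: "\<And>m. \<bar>f m\<bar> \<le> c * exp (real m * s)" and "s < a"
  shows "(\<lambda>m. f m / g m) \<longlonglongrightarrow> 0"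
proof (rule Lim_null_comparison)
  show "\<forall>\<^sub>F m in sequentially. norm (f m / g m) \<le> 2 * c * exp (real m * (s - a))"
    using g
  proof eventually_elim
    case (elim m)
    then have "0 < g m"
      using exp_gt_zero[of "real m * a"] by linarith
    have "\<bar>f m\<bar> / g m \<le> c * exp (real m * s) / (exp (real m * a) / 2)"
      using f[of m] elim by (intro frac_le) (auto intro: order_trans[OF abs_ge_zero])
    also have "\<dots> = 2 * c * exp (real m * (s - a))"
      by (simp add: algebra_simps exp_diff)
    finally show ?case
      using \<open>0 < g m\<close> by (simp add: abs_divide)
  qed
  show "(\<lambda>m. 2 * c * exp (real m * (s - a))) \<longlonglongrightarrow> 0"
    using \<open>s < a\<close> by (intro tendsto_mult_right_zero tendsto_exp_mult_neg) simp
qed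

lemma eventually_eig_gap:
  fixes M :: "nat \<Rightarrow> mat2"
  assumes x_lo: "\<And>m. exp (real m * a) \<le> M m$1$1" and z_hi: "\<And>m. M m$2$2 \<le> c * exp (real m * b)"
    and "b < a"
  shows "\<forall>\<^sub>F m in sequentially. exp (real m * a) / 2 \<le> eig_max (M m) - eig_min (M m)"
proof -
  have "(\<lambda>m. 2 * c * exp (real m * (b - a))) \<longlonglongrightarrow> 0"
    using \<open>b < a\<close> by (intro tendsto_mult_right_zero tendsto_exp_mult_neg) simp
  then have "\<forall>\<^sub>F m in sequentially. 2 * c * exp (real m * (b - a)) < 1"
    by (rule order_tendstoD) simp
  then show ?thesis
  proof eventually_elim
    case (elim m)
    have "exp (real m * b) = exp (real m * (b - a)) * exp (real m * a)"
      by (simp add: algebra_simps flip: exp_add)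
    then have "2 * M m$2$2 \<le> (2 * c * exp (real m * (b - a))) * exp (real m * a)"
      using z_hi[of m] by simp
    also have "\<dots> \<le> exp (real m * a)"
      using elim by simp
    finally show ?case
      using x_lo[of m] eig_max_minus_eig_min_ge[of "M m"] by simp
  qed
qed

lemma eig_growth_rates:
  fixes M :: "nat \<Rightarrow> mat2" and a b c w :: real
  assumes x_lo: "\<And>m. exp (real m * a) \<le> M m$1$1" and x_hi: "\<And>m. M m$1$1 \<le> c * exp (real m * a)"
    and z_lo: "\<And>m. w * exp (real m * b) \<le> M m$2$2" and z_hi: "\<And>m. M m$2$2 \<le> c * exp (real m * b)"
    and det: "\<And>m. exp (real m * a) * M m$2$2 \<le> M m$1$1 * M m$2$2 - (M m$1$2)\<^sup>2"
    and "0 < w" "b < a"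
  shows "0 < eig_min (M m)"
    and "(\<lambda>m. ln (eig_max (M m)) / real m) \<longlonglongrightarrow> a"
    and "(\<lambda>m. ln (eig_min (M m)) / real m) \<longlonglongrightarrow> b"
proof -
  have "0 < c"
    using x_lo[of 0] x_hi[of 0] by simp
  have z_pos: "0 < M m$2$2" for m
    using z_lo[of m] \<open>0 < w\<close> by (meson exp_gt_zero mult_pos_pos order_less_le_trans)
  have exp_le: "c * exp (real m * b) \<le> c * exp (real m * a)" for m
    using \<open>b < a\<close> \<open>0 < c\<close> by (simp add: mult_left_mono)
  have "M m$1$1 + M m$2$2 \<le> (2 * c) * exp (real m * a)" for m
    using x_hi[of m] z_hi[of m] exp_le[of m] by linarith
  note eig = eig_bounds_of_det_ge[OF exp_gt_zero x_lo z_pos this det]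
  show "0 < eig_min (M m)"
    by (rule eig(1))
  show "(\<lambda>m. ln (eig_max (M m)) / real m) \<longlonglongrightarrow> a"
    using x_lo eig_max_ge eig(2) by (intro tendsto_ln_div_of_exp_bounds[of 1]) (auto intro: order_trans)
  show "(\<lambda>m. ln (eig_min (M m)) / real m) \<longlonglongrightarrow> b"
  proof (rule tendsto_ln_div_of_exp_bounds[of "w / (2 * c)" _ _ c])
    show "w / (2 * c) * exp (real m * b) \<le> eig_min (M m)" for m
      using divide_right_mono[OF z_lo[of m], of "2 * c"] eig(3)[of m] \<open>0 < c\<close> by simp
    show "eig_min (M m) \<le> c * exp (real m * b)" for m
      using z_hi[of m] eig_min_le[of "M m"] by simp
  qed (use \<open>0 < w\<close> \<open>0 < c\<close> in simp)
qed

lemma tendsto_scaled_mlog_nth: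
  fixes M :: "nat \<Rightarrow> mat2" and a b r c w :: real
  assumes sym: "\<And>m. transpose (M m) = M m"
    and x_lo: "\<And>m. exp (real m * a) \<le> M m$1$1" and x_hi: "\<And>m. M m$1$1 \<le> c * exp (real m * a)"
    and z_lo: "\<And>m. w * exp (real m * b) \<le> M m$2$2" and z_hi: "\<And>m. M m$2$2 \<le> c * exp (real m * b)"
    and y: "\<And>m. \<bar>M m$1$2\<bar> \<le> c * exp (real m * r)"
    and det: "\<And>m. exp (real m * a) * M m$2$2 \<le> M m$1$1 * M m$2$2 - (M m$1$2)\<^sup>2"
    and "0 < w" "b < a" "r < a"
  shows "(\<lambda>m. ((1 / real m) *\<^sub>R mlog (M m))$1$2) \<longlonglongrightarrow> 0"
    and "(\<lambda>m. ((1 / real m) *\<^sub>R mlog (M m))$2$2) \<longlonglongrightarrow> b"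
proof -
  define \<alpha> where "\<alpha> m = eig_max (M m)" for m
  define \<beta> where "\<beta> m = eig_min (M m)" for m
  define D where "D m = (ln (\<alpha> m) - ln (\<beta> m)) / real m" for m
  note rates = eig_growth_rates[OF x_lo x_hi z_lo z_hi det \<open>0 < w\<close> \<open>b < a\<close>, folded \<alpha>_def \<beta>_def]
  have D: "D \<longlonglongrightarrow> a - b"
    unfolding D_def diff_divide_distrib by (rule tendsto_diff[OF rates(2,3)])
  note gap = eventually_eig_gap[OF x_lo z_hi \<open>b < a\<close>, folded \<alpha>_def \<beta>_def]
  have entries: "\<forall>\<^sub>F m in sequentially.
      ((1 / real m) *\<^sub>R mlog (M m))$1$2 = D m * (M m$1$2 / (\<alpha> m - \<beta> m)) \<and>
      ((1 / real m) *\<^sub>R mlog (M m))$2$2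
        = ln (\<beta> m) / real m + D m * ((M m$2$2 - \<beta> m) / (\<alpha> m - \<beta> m))"
    using gap
  proof eventually_elim
    case (elim m)
    then have "\<beta> m \<noteq> \<alpha> m"
      using exp_gt_zero[of "real m * a"] by linarith
    then show ?case
      using mlog_eq_interpolation[OF sym, of m] rates(1)[of m]
      by (simp add: \<alpha>_def \<beta>_def D_def add_divide_distrib)
  qed
  have "(\<lambda>m. D m * (M m$1$2 / (\<alpha> m - \<beta> m))) \<longlonglongrightarrow> 0"
    using tendsto_mult[OF D tendsto_div_exp_dominated[OF gap y \<open>r < a\<close>]] by simp
  then show "(\<lambda>m. ((1 / real m) *\<^sub>R mlog (M m))$1$2) \<longlonglongrightarrow> 0"
    by (rule Lim_transform_eventually) (use entries in \<open>eventually_elim, simp\<close>)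
  have "\<bar>M m$2$2 - \<beta> m\<bar> \<le> c * exp (real m * b)" for m
    using z_hi[of m] eig_min_le[of "M m"] rates(1)[of m] by (simp add: \<beta>_def)
  from tendsto_mult[OF D tendsto_div_exp_dominated[OF gap this \<open>b < a\<close>]]
  have "(\<lambda>m. D m * ((M m$2$2 - \<beta> m) / (\<alpha> m - \<beta> m))) \<longlonglongrightarrow> 0"
    by simp
  from tendsto_add[OF rates(3) this]
  have "(\<lambda>m. ln (\<beta> m) / real m + D m * ((M m$2$2 - \<beta> m) / (\<alpha> m - \<beta> m))) \<longlonglongrightarrow> b"
    by simp
  then show "(\<lambda>m. ((1 / real m) *\<^sub>R mlog (M m))$2$2) \<longlonglongrightarrow> b"
    by (rule Lim_transform_eventually) (use entries in \<open>eventually_elim, simp\<close>)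
qed

section \<open>Sums of spectral matrices\<close>

lemma spec_sum_11_le:
  fixes n :: nat
  assumes "\<And>i. i < n \<Longrightarrow> a i \<le> A \<and> b i \<le> A"
  shows "(\<Sum>i<n. spec_mat (a i) (b i) (phi i))$1$1 \<le> real n * A"
proof -
  have "spec_mat (a i) (b i) (phi i) $1$1 \<le> A" if "i < n" for i
  proof -
    have "a i * cos (phi i) ^ 2 \<le> A * cos (phi i) ^ 2" "b i * sin (phi i) ^ 2 \<le> A * sin (phi i) ^ 2"
      using assms[OF that] by (simp_all add: mult_right_mono)
    then have "spec_mat (a i) (b i) (phi i) $1$1 \<le> A * (sin (phi i) ^ 2 + cos (phi i) ^ 2)"
      unfolding spec_mat_nth distrib_left by linarith
    then show ?thesis
      by simp
  qed
  then show ?thesis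
    using sum_bounded_above[of "{..<n}" _ A] by simp
qed

lemma spec_sum_22_le:
  fixes n :: nat
  assumes "\<And>i. i < n \<Longrightarrow> sin (phi i) \<noteq> 0 \<Longrightarrow> a i \<le> A" "\<And>i. i < n \<Longrightarrow> cos (phi i) \<noteq> 0 \<Longrightarrow> b i \<le> A"
  shows "(\<Sum>i<n. spec_mat (a i) (b i) (phi i))$2$2 \<le> real n * A"
proof -
  have "spec_mat (a i) (b i) (phi i) $2$2 \<le> A" if "i < n" for i
  proof -
    have "a i * sin (phi i) ^ 2 \<le> A * sin (phi i) ^ 2"
      using assms(1)[OF that] by (cases "sin (phi i) = 0") (simp_all add: mult_right_mono)
    moreover have "b i * cos (phi i) ^ 2 \<le> A * cos (phi i) ^ 2"
      using assms(2)[OF that] by (cases "cos (phi i) = 0") (simp_all add: mult_right_mono)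
    ultimately have "spec_mat (a i) (b i) (phi i) $2$2 \<le> A * (sin (phi i) ^ 2 + cos (phi i) ^ 2)"
      unfolding spec_mat_nth distrib_left by linarith
    then show ?thesis
      by simp
  qed
  then show ?thesis
    using sum_bounded_above[of "{..<n}" _ A] by simp
qed

lemma spec_sum_12_abs_le:
  fixes n :: nat
  assumes "0 \<le> A" "\<And>i. i < n \<Longrightarrow> 0 \<le> a i \<and> 0 \<le> b i"
    and "\<And>i. i < n \<Longrightarrow> sin (phi i) \<noteq> 0 \<Longrightarrow> a i \<le> A \<and> b i \<le> A"
  shows "\<bar>(\<Sum>i<n. spec_mat (a i) (b i) (phi i))$1$2\<bar> \<le> real n * A"
proof -
  have "\<bar>spec_mat (a i) (b i) (phi i) $1$2\<bar> \<le> A" if "i < n" for i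
  proof (cases "sin (phi i) = 0")
    case False
    have "\<bar>cos (phi i) * sin (phi i)\<bar> \<le> 1"
      by (simp add: abs_mult mult_le_one)
    moreover have "\<bar>a i - b i\<bar> \<le> A"
      using assms(2,3)[OF that] False by linarith
    ultimately have "\<bar>a i - b i\<bar> * \<bar>cos (phi i) * sin (phi i)\<bar> \<le> A * 1"
      by (intro mult_mono) auto
    then show ?thesis
      by (simp add: spec_mat_nth abs_mult mult.assoc)
  qed (use assms(1) in \<open>simp add: spec_mat_nth\<close>)
  then have "(\<Sum>i<n. \<bar>spec_mat (a i) (b i) (phi i) $1$2\<bar>) \<le> real n * A"
    using sum_bounded_above[of "{..<n}" _ A] by simp
  then show ?thesis
    by (simp add: order_trans[OF sum_abs])
qed

lemma spec_sum_diag_ge: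
  fixes n :: nat
  assumes "\<And>i. i < n \<Longrightarrow> 0 \<le> a i \<and> 0 \<le> b i" "j < n"
  shows "spec_mat (a j) (b j) (phi j) $1$1 \<le> (\<Sum>i<n. spec_mat (a i) (b i) (phi i))$1$1"
    and "spec_mat (a j) (b j) (phi j) $2$2 \<le> (\<Sum>i<n. spec_mat (a i) (b i) (phi i))$2$2"
  using assms by (auto simp: spec_mat_nth intro!: member_le_sum)

lemma spec_mat_quadratic_form:
  "spec_mat a b t $1$1 * v\<^sup>2 + 2 * spec_mat a b t $1$2 * v * w + spec_mat a b t $2$2 * w\<^sup>2
    = a * (cos t * v + sin t * w)\<^sup>2 + b * (cos t * w - sin t * v)\<^sup>2"
  by (simp add: spec_mat_nth power2_eq_square algebra_simps)

text \<open>The first summand dominates \<open>a 0\<close> times the projection onto \<open>e1\<close>; evaluating the quadratic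
  form of the sum at \<open>(M$2$2, -M$1$2)\<close> turns this into the determinant bound.\<close>
lemma det_spec_sum_ge:
  fixes a b phi :: "nat \<Rightarrow> real" and n :: nat
  defines "M \<equiv> \<Sum>i<n. spec_mat (a i) (b i) (phi i)"
  assumes "0 < n" "sin (phi 0) = 0" "\<And>i. i < n \<Longrightarrow> 0 \<le> a i \<and> 0 \<le> b i" "0 < M$2$2"
  shows "a 0 * M$2$2 \<le> M$1$1 * M$2$2 - (M$1$2)\<^sup>2"
proof -
  define q where "q i v w = a i * (cos (phi i) * v + sin (phi i) * w)\<^sup>2
    + b i * (cos (phi i) * w - sin (phi i) * v)\<^sup>2" for i v w
  have form: "M$1$1 * v\<^sup>2 + 2 * M$1$2 * v * w + M$2$2 * w\<^sup>2 = (\<Sum>i<n. q i v w)" for v w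
    unfolding M_def q_def spec_mat_quadratic_form[symmetric]
    by (simp add: sum_distrib_left sum_distrib_right sum.distrib mult.assoc)
  have "cos (phi 0) ^ 2 = 1"
    using assms(3) sin_cos_squared_add[of "phi 0"] by simp
  then have "a 0 * v\<^sup>2 \<le> q 0 v w" for v w
    using assms(3) assms(4)[of 0] \<open>0 < n\<close> by (simp add: q_def power_mult_distrib)
  also have "q 0 v w \<le> (\<Sum>i<n. q i v w)" for v w
    using assms(2,4) by (intro member_le_sum) (auto simp: q_def)
  finally have "a 0 * (M$2$2)\<^sup>2 \<le> M$1$1 * (M$2$2)\<^sup>2 + 2 * M$1$2 * M$2$2 * (- M$1$2) + M$2$2 * (M$1$2)\<^sup>2"
    using form[of "M$2$2" "- M$1$2"] by simp
  then have "M$2$2 * (a 0 * M$2$2) \<le> M$2$2 * (M$1$1 * M$2$2 - (M$1$2)\<^sup>2)"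
    by (simp add: power2_eq_square algebra_simps)
  then show ?thesis
    using \<open>0 < M$2$2\<close> by simp
qed

lemma symmetric_spec_sum: "transpose (\<Sum>i<n. spec_mat (a i) (b i) (phi i)) = (\<Sum>i<n. spec_mat (a i) (b i) (phi i))"
  unfolding mat2_eq_iff by (simp add: transpose_def spec_mat_nth)

lemma spec_sum_22_exp_bounds:
  fixes lam mu phi :: "nat \<Rightarrow> real" and n :: nat and k :: real
  assumes k_sin: "\<And>i. i < n \<Longrightarrow> sin (phi i) \<noteq> 0 \<Longrightarrow> lam i \<le> k"
    and k_cos: "\<And>i. i < n \<Longrightarrow> cos (phi i) \<noteq> 0 \<Longrightarrow> mu i \<le> k"
    and attained: "\<exists>i<n. sin (phi i) \<noteq> 0 \<and> lam i = k \<or> cos (phi i) \<noteq> 0 \<and> mu i = k"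
  obtains w where "0 < w"
    and "\<And>m. w * exp (real m * k) \<le> (\<Sum>i<n. spec_mat (exp (real m * lam i)) (exp (real m * mu i)) (phi i))$2$2"
    and "\<And>m. (\<Sum>i<n. spec_mat (exp (real m * lam i)) (exp (real m * mu i)) (phi i))$2$2 \<le> real n * exp (real m * k)"
proof -
  obtain j where "j < n" and j: "sin (phi j) \<noteq> 0 \<and> lam j = k \<or> cos (phi j) \<noteq> 0 \<and> mu j = k"
    using attained by blast
  define w where "w = (if sin (phi j) \<noteq> 0 \<and> lam j = k then sin (phi j) ^ 2 else cos (phi j) ^ 2)"
  have "0 < w"
    using j by (auto simp: w_def)
  moreover have "w * exp (real m * k) \<le> (\<Sum>i<n. spec_mat (exp (real m * lam i)) (exp (real m * mu i)) (phi i))$2$2"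
    for m
  proof -
    have "w * exp (real m * k) \<le> spec_mat (exp (real m * lam j)) (exp (real m * mu j)) (phi j) $2$2"
      using j by (auto simp: w_def spec_mat_nth mult.commute)
    also have "\<dots> \<le> (\<Sum>i<n. spec_mat (exp (real m * lam i)) (exp (real m * mu i)) (phi i))$2$2"
      using \<open>j < n\<close> by (intro spec_sum_diag_ge(2)) auto
    finally show ?thesis .
  qed
  moreover have "(\<Sum>i<n. spec_mat (exp (real m * lam i)) (exp (real m * mu i)) (phi i))$2$2
      \<le> real n * exp (real m * k)" for m
    using k_sin k_cos by (intro spec_sum_22_le exp_mult_mono)
  ultimately show ?thesis
    by (rule that)
qed

lemma tendsto_scaled_mlog_spec_sum:
  fixes lam mu phi :: "nat \<Rightarrow> real" and n :: nat and k :: real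
  defines "M \<equiv> \<lambda>m. \<Sum>i<n. spec_mat (exp (real m * lam i)) (exp (real m * mu i)) (phi i)"
  assumes "0 < n" "sin (phi 0) = 0" "mu 0 < lam 0"
    and lower: "\<And>i. 0 < i \<Longrightarrow> i < n \<Longrightarrow> lam i < lam 0 \<and> mu i < lam 0"
    and k_sin: "\<And>i. 0 < i \<Longrightarrow> i < n \<Longrightarrow> sin (phi i) \<noteq> 0 \<Longrightarrow> lam i \<le> k"
    and k_cos: "\<And>i. i < n \<Longrightarrow> cos (phi i) \<noteq> 0 \<Longrightarrow> mu i \<le> k"
    and attained: "\<exists>i<n. sin (phi i) \<noteq> 0 \<and> lam i = k \<or> cos (phi i) \<noteq> 0 \<and> mu i = k"
    and "k < lam 0"
  shows "(\<lambda>m. ((1 / real m) *\<^sub>R mlog (M m))$1$2) \<longlonglongrightarrow> 0"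
    and "(\<lambda>m. ((1 / real m) *\<^sub>R mlog (M m))$2$2) \<longlonglongrightarrow> k"
proof -
  have pos_index: "0 < i" if "sin (phi i) \<noteq> 0" for i
    using that \<open>sin (phi 0) = 0\<close> by (cases i) auto
  obtain w where "0 < w" and z_lo: "\<And>m. w * exp (real m * k) \<le> M m$2$2"
    and z_hi: "\<And>m. M m$2$2 \<le> real n * exp (real m * k)"
    using spec_sum_22_exp_bounds[OF k_sin[OF pos_index] k_cos attained] unfolding M_def by blast
  obtain r where "r < lam 0" and r: "\<And>x. x \<in> lam ` {0<..<n} \<union> mu ` {0<..<n} \<Longrightarrow> x \<le> r"
    by (rule finite_strict_upper_bound[of "lam ` {0<..<n} \<union> mu ` {0<..<n}" "lam 0"]) (use lower in auto)
  have x_lo: "exp (real m * lam 0) \<le> M m$1$1" for m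
    using spec_sum_diag_ge(1)[of n "\<lambda>i. exp (real m * lam i)" "\<lambda>i. exp (real m * mu i)" 0 phi]
      \<open>0 < n\<close> \<open>sin (phi 0) = 0\<close> sin_cos_squared_add[of "phi 0"] by (simp add: M_def spec_mat_nth)
  have "lam i \<le> lam 0 \<and> mu i \<le> lam 0" if "i < n" for i
    using lower[of i] that \<open>mu 0 < lam 0\<close> by (cases "i = 0") auto
  then have x_hi: "M m$1$1 \<le> real n * exp (real m * lam 0)" for m
    unfolding M_def by (intro spec_sum_11_le conjI exp_mult_mono) auto
  have y: "\<bar>M m$1$2\<bar> \<le> real n * exp (real m * r)" for m
  proof (unfold M_def, rule spec_sum_12_abs_le)
    fix i
    assume "i < n" "sin (phi i) \<noteq> 0"
    then have "lam i \<le> r \<and> mu i \<le> r"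
      using r pos_index by simp
    then show "exp (real m * lam i) \<le> exp (real m * r) \<and> exp (real m * mu i) \<le> exp (real m * r)"
      using exp_mult_mono by blast
  qed simp_all
  have "0 < M m$2$2" for m
    using z_lo[of m] \<open>0 < w\<close> by (meson exp_gt_zero mult_pos_pos order_less_le_trans)
  then have det: "exp (real m * lam 0) * M m$2$2 \<le> M m$1$1 * M m$2$2 - (M m$1$2)\<^sup>2" for m
    using det_spec_sum_ge[of n phi "\<lambda>i. exp (real m * lam i)" "\<lambda>i. exp (real m * mu i)"]
      \<open>0 < n\<close> \<open>sin (phi 0) = 0\<close> by (simp add: M_def)
  have sym: "transpose (M m) = M m" for m
    unfolding M_def by (rule symmetric_spec_sum)
  show "(\<lambda>m. ((1 / real m) *\<^sub>R mlog (M m))$1$2) \<longlonglongrightarrow> 0"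
    and "(\<lambda>m. ((1 / real m) *\<^sub>R mlog (M m))$2$2) \<longlonglongrightarrow> k"
    using tendsto_scaled_mlog_nth[OF sym x_lo x_hi z_lo z_hi y det \<open>0 < w\<close> \<open>k < lam 0\<close> \<open>r < lam 0\<close>]
    by auto
qed

text \<open>The exponent \<open>\<mu>\<^sub>*\<close> of the statement: \<open>sin (phi i) \<noteq> 0\<close> says that \<open>u\<^sub>i\<close>, and
  \<open>cos (phi i) \<noteq> 0\<close> that \<open>v\<^sub>i\<close>, is not aligned with \<open>e1\<close>.\<close>
definition mu_star :: "nat \<Rightarrow> (nat \<Rightarrow> real) \<Rightarrow> (nat \<Rightarrow> real) \<Rightarrow> (nat \<Rightarrow> real) \<Rightarrow> real" where
  "mu_star n lam mu phi =
    Max ({lam i | i. 0 < i \<and> i < n \<and> sin (phi i) \<noteq> 0} \<union> {mu i | i. i < n \<and> cos (phi i) \<noteq> 0})"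

lemma mu_star_bounds:
  fixes lam mu phi :: "nat \<Rightarrow> real" and n :: nat
  defines "k \<equiv> mu_star n lam mu phi"
  assumes "0 < n" "cos (phi 0) \<noteq> 0" "mu 0 < lam 0"
    and lower: "\<And>i. 0 < i \<Longrightarrow> i < n \<Longrightarrow> lam i < lam 0 \<and> mu i < lam 0"
  shows "k < lam 0"
    and "\<And>i. 0 < i \<Longrightarrow> i < n \<Longrightarrow> sin (phi i) \<noteq> 0 \<Longrightarrow> lam i \<le> k"
    and "\<And>i. i < n \<Longrightarrow> cos (phi i) \<noteq> 0 \<Longrightarrow> mu i \<le> k"
    and "\<exists>i<n. sin (phi i) \<noteq> 0 \<and> lam i = k \<or> cos (phi i) \<noteq> 0 \<and> mu i = k"
proof -
  define V where "V = {lam i | i. 0 < i \<and> i < n \<and> sin (phi i) \<noteq> 0} \<union> {mu i | i. i < n \<and> cos (phi i) \<noteq> 0}"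
  have "finite V"
    by (rule finite_subset[of _ "lam ` {..<n} \<union> mu ` {..<n}"]) (auto simp: V_def)
  moreover have "mu 0 \<in> V"
    using assms(2,3) by (auto simp: V_def)
  ultimately have "k \<in> V" and k_ge: "\<And>v. v \<in> V \<Longrightarrow> v \<le> k"
    unfolding k_def mu_star_def V_def[symmetric] by (auto intro: Max_in)
  moreover have "mu i < lam 0" if "i < n" for i
    using lower[of i] assms(4) that by (cases "i = 0") auto
  ultimately show "k < lam 0"
    using lower by (auto simp: V_def)
  show "\<And>i. 0 < i \<Longrightarrow> i < n \<Longrightarrow> sin (phi i) \<noteq> 0 \<Longrightarrow> lam i \<le> k"
    "\<And>i. i < n \<Longrightarrow> cos (phi i) \<noteq> 0 \<Longrightarrow> mu i \<le> k"
    by (auto simp: V_def intro!: k_ge)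
  show "\<exists>i<n. sin (phi i) \<noteq> 0 \<and> lam i = k \<or> cos (phi i) \<noteq> 0 \<and> mu i = k"
    using \<open>k \<in> V\<close> by (auto simp: V_def)
qed

lemma aligned_uvec_e1_iff: "aligned (uvec t) e1 \<longleftrightarrow> sin t = 0"
proof
  assume "sin t = 0"
  then have "cos t = 1 \<or> cos t = -1"
    using sin_cos_squared_add[of t] by (simp add: power2_eq_1_iff)
  with \<open>sin t = 0\<close> show "aligned (uvec t) e1"
    by (auto simp: aligned_def vec2_eq_iff uvec_def e1_def axis_def)
qed (auto simp: aligned_def vec2_eq_iff uvec_def e1_def axis_def)

lemma aligned_vvec_e1_iff: "aligned (vvec t) e1 \<longleftrightarrow> cos t = 0"
proof
  assume "cos t = 0"
  then have "sin t = 1 \<or> sin t = -1"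
    using sin_cos_squared_add[of t] by (simp add: power2_eq_1_iff)
  with \<open>cos t = 0\<close> show "aligned (vvec t) e1"
    by (auto simp: aligned_def vec2_eq_iff vvec_def e1_def axis_def)
qed (auto simp: aligned_def vec2_eq_iff vvec_def e1_def axis_def)

theorem lemma4:
  fixes n :: nat and lam mu phi :: "nat \<Rightarrow> real" and S :: mat2
  assumes n: "n \<ge> 1"
    and ord: "\<And>i. i < n \<Longrightarrow> mu i \<le> lam i"
    and phi_rng: "\<And>i. i < n \<Longrightarrow> - (pi/2) \<le> phi i \<and> phi i \<le> pi/2"
    and top1: "lam 0 > mu 0"
    and top2: "\<And>i. 0 < i \<Longrightarrow> i < n \<Longrightarrow> lam 0 > lam i \<and> lam 0 > mu i"
    and u1: "uvec (phi 0) = e1" and v1: "vvec (phi 0) = e2"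
    and lim: "(\<lambda>m::nat. (1 / real m) *\<^sub>R
                 mlog (\<Sum>i<n. mexp (real m *\<^sub>R spec_mat (lam i) (mu i) (phi i))))
              \<longlonglongrightarrow> S"
  shows "S *v e2 =
    Max ({lam i | i. 0 < i \<and> i < n \<and> \<not> aligned (uvec (phi i)) e1}
       \<union> {mu i | i. i < n \<and> \<not> aligned (vvec (phi i)) e1}) *\<^sub>R e2"
proof -
  \<comment> \<open>\<open>ord\<close> and \<open>phi_rng\<close> only normalise the spectral data, and \<open>v1\<close> follows from \<open>u1\<close>.\<close>
  have phi0: "sin (phi 0) = 0" "cos (phi 0) \<noteq> 0"
    using u1 by (simp_all add: vec2_eq_iff uvec_def e1_def axis_def)
  have "0 < n"
    using n by simp
  have "(\<Sum>i<n. mexp (real m *\<^sub>R spec_mat (lam i) (mu i) (phi i)))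
      = (\<Sum>i<n. spec_mat (exp (real m * lam i)) (exp (real m * mu i)) (phi i))" for m
    by (simp add: scaleR_spec_mat mexp_spec_mat)
  then have "(\<lambda>m. (1 / real m) *\<^sub>R mlog (\<Sum>i<n. spec_mat (exp (real m * lam i)) (exp (real m * mu i)) (phi i)))
      \<longlonglongrightarrow> S"
    using lim by simp
  note S_nth = tendsto_vec_nth[OF tendsto_vec_nth[OF this]]
  note k = mu_star_bounds[of n phi mu lam, OF \<open>0 < n\<close> phi0(2) top1 top2]
  note entries = tendsto_scaled_mlog_spec_sum[OF \<open>0 < n\<close> phi0(1) top1 top2 k(2,3,4,1)]
  have "S$1$2 = 0" "S$2$2 = mu_star n lam mu phi"
    using LIMSEQ_unique[OF S_nth entries(1)] LIMSEQ_unique[OF S_nth entries(2)] by simp_all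
  then show ?thesis
    by (simp add: vec2_eq_iff matrix_vector_mult_def sum_2 e2_def axis_def mu_star_def
        aligned_uvec_e1_iff aligned_vvec_e1_iff)
qed

end
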